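(* Let $(T_0,\widetilde T_0)$ be a joint pair of closed abstract Friedrichs operators on a complex Hilbert space $\mathcal{H}$, with $T_1:=\widetilde T_0^*$, $\widetilde T_1:=T_0^*$, $\mathcal{W}_0:=\operatorname{dom}T_0=\operatorname{dom}\widetilde T_0$ and $\mathcal{W}:=\operatorname{dom}T_1=\operatorname{dom}\widetilde T_1$. Define on $\mathcal{W}$ the sesquilinear form $[u\mid v]:=\langle T_1u,v\rangle-\langle u,\widetilde T_1 v\rangle$, and for $S\subseteq\mathcal{W}$ let $S^{[\perp]}:=\{u\in\mathcal{W}: [u\mid v]=0 \text{ for all } v\in S\}$. Then $$\bigl(\mathcal{W}_0\dotplus\operatorname{ker}T_1\dotplus\operatorname{ker}\widetilde T_1\bigr)^{[\perp][\perp]}=\mathcal{W}.$$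
   Context: $\mathcal{H}$ is a complex Hilbert space with inner product $\langle\cdot,\cdot\rangle$ (linear in the first argument) and norm $\|\cdot\|$. A pair $(T,\widetilde T)$ of densely defined linear operators on $\mathcal{H}$ is a joint pair of abstract Friedrichs operators if: (T1) $T$ and $\widetilde T$ have a common dense domain $\mathcal{D}$ and $\langle T\varphi,\psi\rangle=\langle\varphi,\widetilde T\psi\rangle$ for all $\varphi,\psi\in\mathcal{D}$; (T2) there is $c>0$ with $\|(T+\widetilde T)\varphi\|\le c\|\varphi\|$ for all $\varphi\in\mathcal{D}$; (T3) there is $\mu_0>0$ with $\langle (T+\widetilde T)\varphi,\varphi\rangle\ge 2\mu_0\|\varphi\|^2$ for all $\varphi\in\mathcal{D}$. A joint pair of closed abstract Friedrichs operators is such a pair $(T_0,\widetilde T_0)$ in which both operators are closed. One has $T_0\subseteq T_1$, $\widetilde T_0\subseteq\widetilde T_1$, $\operatorname{dom}T_1=\operatorname{dom}\widetilde T_1$, and the sum $\mathcal{W}_0+\operatorname{ker}T_1+\operatorname{ker}\widetilde T_1$ is direct. *)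

theory Defs
  imports "HOL-Analysis.Analysis"
begin

text \<open>Completeness is the
library class banach.\<close>

class complex_inner = real_normed_vector +
  fixes scaleC :: "complex \<Rightarrow> 'a \<Rightarrow> 'a"
    and cinner :: "'a \<Rightarrow> 'a \<Rightarrow> complex"
  assumes scaleC_add_right: "scaleC a (x + y) = scaleC a x + scaleC a y"
    and scaleC_add_left: "scaleC (a + b) x = scaleC a x + scaleC b x"
    and scaleC_scaleC: "scaleC a (scaleC b x) = scaleC (a * b) x"
    and scaleC_one: "scaleC 1 x = x"
    and scaleR_scaleC: "scaleR r x = scaleC (complex_of_real r) x"
    and cinner_add_left: "cinner (x + y) z = cinner x z + cinner y z"
    and cinner_scaleC_left: "cinner (scaleC a x) y = a * cinner x y"
    and cinner_commute: "cinner x y = cnj (cinner y x)"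
    and cinner_ge_zero: "0 \<le> Re (cinner x x)"
    and cinner_eq_zero_iff: "cinner x x = 0 \<longleftrightarrow> x = 0"
    and norm_eq_sqrt_cinner: "norm x = sqrt (Re (cinner x x))"

text \<open>A (possibly unbounded) operator is a pair of a domain D and a function T
(whose values outside D are irrelevant).\<close>

definition csubspace :: "'a::complex_inner set \<Rightarrow> bool" where
  "csubspace S \<longleftrightarrow> 0 \<in> S \<and> (\<forall>x\<in>S. \<forall>y\<in>S. x + y \<in> S) \<and> (\<forall>c. \<forall>x\<in>S. scaleC c x \<in> S)"

definition clinear_op :: "'a::complex_inner set \<Rightarrow> ('a \<Rightarrow> 'a) \<Rightarrow> bool" where
  "clinear_op D T \<longleftrightarrow> csubspace D \<and> (\<forall>x\<in>D. \<forall>y\<in>D. T (x + y) = T x + T y)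
     \<and> (\<forall>c. \<forall>x\<in>D. T (scaleC c x) = scaleC c (T x))"

definition densely_defined :: "'a::complex_inner set \<Rightarrow> bool" where
  "densely_defined D \<longleftrightarrow> closure D = UNIV"

definition closed_op :: "'a::complex_inner set \<Rightarrow> ('a \<Rightarrow> 'a) \<Rightarrow> bool" where
  "closed_op D T \<longleftrightarrow> closed {(x, T x) | x. x \<in> D}"

definition adj_dom :: "'a::complex_inner set \<Rightarrow> ('a \<Rightarrow> 'a) \<Rightarrow> 'a set" where
  "adj_dom D T = {v. \<exists>w. \<forall>u\<in>D. cinner (T u) v = cinner u w}"

definition adj :: "'a::complex_inner set \<Rightarrow> ('a \<Rightarrow> 'a) \<Rightarrow> 'a \<Rightarrow> 'a" where
  "adj D T v = (THE w. \<forall>u\<in>D. cinner (T u) v = cinner u w)"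

definition op_kernel :: "'a::complex_inner set \<Rightarrow> ('a \<Rightarrow> 'a) \<Rightarrow> 'a set" where
  "op_kernel D T = {u \<in> D. T u = 0}"

definition joint_pair_AFO :: "'a::complex_inner set \<Rightarrow> ('a \<Rightarrow> 'a) \<Rightarrow> ('a \<Rightarrow> 'a) \<Rightarrow> bool" where
  "joint_pair_AFO D T Tt \<longleftrightarrow>
     clinear_op D T \<and> clinear_op D Tt \<and> densely_defined D \<and>
     (\<forall>\<phi>\<in>D. \<forall>\<psi>\<in>D. cinner (T \<phi>) \<psi> = cinner \<phi> (Tt \<psi>)) \<and>
     (\<exists>c>0. \<forall>\<phi>\<in>D. norm (T \<phi> + Tt \<phi>) \<le> c * norm \<phi>) \<and>
     (\<exists>\<mu>0>0. \<forall>\<phi>\<in>D. Re (cinner (T \<phi> + Tt \<phi>) \<phi>) \<ge> 2 * \<mu>0 * (norm \<phi>)\<^sup>2)"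

definition joint_pair_closed_AFO :: "'a::complex_inner set \<Rightarrow> ('a \<Rightarrow> 'a) \<Rightarrow> ('a \<Rightarrow> 'a) \<Rightarrow> bool" where
  "joint_pair_closed_AFO D T Tt \<longleftrightarrow> joint_pair_AFO D T Tt \<and> closed_op D T \<and> closed_op D Tt"

definition bform :: "('a::complex_inner \<Rightarrow> 'a) \<Rightarrow> ('a \<Rightarrow> 'a) \<Rightarrow> 'a \<Rightarrow> 'a \<Rightarrow> complex" where
  "bform T1 Tt1 u v = cinner (T1 u) v - cinner u (Tt1 v)"

definition bperp :: "'a::complex_inner set \<Rightarrow> ('a \<Rightarrow> 'a) \<Rightarrow> ('a \<Rightarrow> 'a) \<Rightarrow> 'a set \<Rightarrow> 'a set" where
  "bperp W T1 Tt1 S = {u \<in> W. \<forall>v\<in>S. bform T1 Tt1 u v = 0}"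

definition sum3 :: "'a::plus set \<Rightarrow> 'a set \<Rightarrow> 'a set \<Rightarrow> 'a set" where
  "sum3 A B C = {a + b + c | a b c. a \<in> A \<and> b \<in> B \<and> c \<in> C}"

end

theory Submission
  imports Defs
begin

text \<open>Let V = W0 + ker T1 + ker Tt1. The boundary form vanishes on W \<times> W0, so the
  [\<perp>]-complement of W0 is all of W and it suffices to show that V[\<perp>] \<subseteq> W0. For x in
  V[\<perp>], the vector T1 x is orthogonal to ker Tt1 = (ran T0)\<perp>; since T0 is closed and
  bounded below by (T3), its range is closed, so T1 x = T0 w with w \<in> W0 and k = x - w lies in
  ker T1. On ker T1 the operator Tt1 coincides with the adjoint of the bounded extension of
  T0 + Tt0, hence Re \<langle>k, Tt1 k\<rangle> \<ge> 2 \<mu>0 \<parallel>k\<parallel>^2, while [x | k] = 0 gives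
  \<langle>k, Tt1 k\<rangle> = 0. Thus x = w \<in> W0.\<close>

section \<open>Complex inner product spaces\<close>

lemma cinner_zero_left [simp]: "cinner (0::'a::complex_inner) y = 0"
  using cinner_add_left [of "0::'a" 0 y] by simp

lemma cinner_zero_right [simp]: "cinner (x::'a::complex_inner) 0 = 0"
  by (metis cinner_commute cinner_zero_left complex_cnj_zero)

lemma cinner_add_right: "cinner (x::'a::complex_inner) (y + z) = cinner x y + cinner x z"
  by (metis cinner_add_left cinner_commute complex_cnj_add)

lemma cinner_scaleC_right: "cinner (x::'a::complex_inner) (scaleC c y) = cnj c * cinner x y"
  by (metis cinner_commute cinner_scaleC_left complex_cnj_mult)

lemma cinner_minus_left: "cinner (- x::'a::complex_inner) y = - cinner x y"
  by (metis add.right_inverse add_eq_0_iff cinner_add_left cinner_zero_left)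

lemma cinner_minus_right: "cinner (x::'a::complex_inner) (- y) = - cinner x y"
  by (metis cinner_commute cinner_minus_left complex_cnj_minus)

lemma cinner_diff_left: "cinner ((x::'a::complex_inner) - z) y = cinner x y - cinner z y"
  by (simp only: diff_conv_add_uminus cinner_add_left cinner_minus_left)

lemma cinner_diff_right: "cinner (x::'a::complex_inner) (y - z) = cinner x y - cinner x z"
  by (simp only: diff_conv_add_uminus cinner_add_right cinner_minus_right)

lemma cinner_scaleR_left: "cinner (scaleR r (x::'a::complex_inner)) y = of_real r * cinner x y"
  by (simp add: scaleR_scaleC cinner_scaleC_left)

lemma cinner_scaleR_right: "cinner (x::'a::complex_inner) (scaleR r y) = of_real r * cinner x y"
  by (simp add: scaleR_scaleC cinner_scaleC_right)

lemma cinner_eq_zero_sym: "cinner (x::'a::complex_inner) y = 0 \<longleftrightarrow> cinner y x = 0"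
  by (metis cinner_commute complex_cnj_zero)

lemma cinner_swap_eq: "cinner (x::'a::complex_inner) y = cinner u v \<Longrightarrow> cinner y x = cinner v u"
  by (simp add: cinner_commute [of y x] cinner_commute [of v u])

lemma Re_cinner_self: "Re (cinner (x::'a::complex_inner) x) = (norm x)\<^sup>2"
  by (simp add: norm_eq_sqrt_cinner cinner_ge_zero)

lemma cinner_self: "cinner (x::'a::complex_inner) x = of_real ((norm x)\<^sup>2)"
proof (rule complex_eqI)
  show "Im (cinner x x) = Im (of_real ((norm x)\<^sup>2))"
    by (metis cinner_commute cnj.simps(2) equation_minus_iff neg_equal_zero Im_complex_of_real)
qed (simp add: Re_cinner_self del: of_real_power)

lemma scaleC_zero_left [simp]: "scaleC 0 (x::'a::complex_inner) = 0"
  by (metis scaleR_scaleC scaleR_zero_left of_real_0)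

lemma scaleC_minus_one: "scaleC (-1) (x::'a::complex_inner) = - x"
  by (metis add.right_inverse add_eq_0_iff scaleC_add_left scaleC_one scaleC_zero_left)

lemma norm_cinner_le: "cmod (cinner (x::'a::complex_inner) y) \<le> norm x * norm y"
proof (cases "y = 0")
  case False
  define a where "a = cinner x y"
  define n where "n = (norm y)\<^sup>2"
  have n: "n > 0" using False by (simp add: n_def)
  define t where "t = a / of_real n"
  have "cinner (x - scaleC t y) (x - scaleC t y)
      = cinner x x - cnj t * a - (t * cnj a - t * cnj t * of_real n)"
    by (simp only: cinner_diff_left cinner_diff_right cinner_scaleC_left cinner_scaleC_right
        cinner_commute [of y x] a_def n_def cinner_self [of y]) (simp add: algebra_simps)
  also have "\<dots> = cinner x x - a * cnj a / of_real n"
    using n by (simp add: t_def)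
  finally have "0 \<le> Re (cinner x x) - Re (a * cnj a) / n"
    using cinner_ge_zero [of "x - scaleC t y"] by simp
  then have "(cmod a)\<^sup>2 \<le> (norm x)\<^sup>2 * n"
    using n by (simp add: Re_cinner_self complex_mult_cnj cmod_power2 field_simps del: of_real_power)
  also have "\<dots> = (norm x * norm y)\<^sup>2" by (simp add: n_def power_mult_distrib)
  finally show ?thesis
    unfolding a_def by (rule power2_le_imp_le) simp
qed simp

lemma norm_scaleC: "norm (scaleC c (x::'a::complex_inner)) = cmod c * norm x"
proof -
  have "(norm (scaleC c x))\<^sup>2 = Re ((c * cnj c) * cinner x x)"
    by (simp only: Re_cinner_self [symmetric] cinner_scaleC_left cinner_scaleC_right
        mult.assoc mult.left_commute)
  also have "\<dots> = (cmod c * norm x)\<^sup>2"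
    by (simp only: complex_norm_square [symmetric] cinner_self) (simp add: power_mult_distrib)
  finally show ?thesis by (simp add: power2_eq_iff_nonneg)
qed

lemma bounded_bilinear_cinner: "bounded_bilinear (cinner :: 'a::complex_inner \<Rightarrow> 'a \<Rightarrow> complex)"
proof
  show "\<exists>K. \<forall>a b::'a. norm (cinner a b) \<le> norm a * norm b * K"
    by (rule exI [of _ 1]) (simp add: norm_cinner_le)
qed (simp_all add: cinner_add_left cinner_add_right cinner_scaleR_left cinner_scaleR_right
    scaleR_conv_of_real)

lemmas continuous_on_cinner [continuous_intros] =
  bounded_bilinear.continuous_on [OF bounded_bilinear_cinner]

lemma bounded_linear_scaleC: "bounded_linear (scaleC c :: 'a::complex_inner \<Rightarrow> 'a)"
proof (rule bounded_linear_intro [where K = "cmod c"])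
  show "scaleC c (scaleR r x) = scaleR r (scaleC c x)" for r and x :: 'a
    by (simp add: scaleR_scaleC scaleC_scaleC mult.commute)
qed (simp_all add: scaleC_add_right norm_scaleC mult.commute)

lemmas continuous_on_scaleC [continuous_intros] =
  bounded_linear.continuous_on [OF bounded_linear_scaleC]

lemma parallelogram_law:
  "(norm ((a::'a::complex_inner) + b))\<^sup>2 + (norm (a - b))\<^sup>2 = 2 * (norm a)\<^sup>2 + 2 * (norm b)\<^sup>2"
  by (simp only: Re_cinner_self [symmetric] cinner_add_left cinner_add_right cinner_diff_left
      cinner_diff_right) simp

lemma norm_diff_scaleC_squared:
  fixes q m :: "'a::complex_inner"
  shows "(norm (q - scaleC t m))\<^sup>2
    = (norm q)\<^sup>2 - 2 * Re (cnj t * cinner q m) + (cmod t)\<^sup>2 * (norm m)\<^sup>2"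
proof -
  define z where "z = cnj t * cinner q m"
  have "cinner (q - scaleC t m) (q - scaleC t m)
      = cinner q q - (z + cnj z) + (t * cnj t) * cinner m m"
    by (simp only: cinner_diff_left cinner_diff_right cinner_scaleC_left cinner_scaleC_right
        cinner_commute [of m q] z_def complex_cnj_mult complex_cnj_cnj) (simp add: algebra_simps)
  also have "\<dots> = cinner q q - (z + cnj z) + of_real ((cmod t)\<^sup>2 * (norm m)\<^sup>2)"
    by (simp only: complex_norm_square [symmetric] cinner_self [of m] of_real_mult)
  finally show ?thesis
    by (simp add: Re_cinner_self [symmetric] z_def del: of_real_power)
qed

section \<open>Projections, Riesz representation and adjoints\<close>

lemma csubspace_diff: "csubspace S \<Longrightarrow> x \<in> S \<Longrightarrow> y \<in> S \<Longrightarrow> x - y \<in> S"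
  unfolding csubspace_def by (metis diff_conv_add_uminus scaleC_minus_one)

lemma csubspace_scaleR: "csubspace S \<Longrightarrow> x \<in> S \<Longrightarrow> scaleR r x \<in> S"
  unfolding csubspace_def by (simp add: scaleR_scaleC)

lemma clinear_op_diff: "clinear_op D T \<Longrightarrow> x \<in> D \<Longrightarrow> y \<in> D \<Longrightarrow> T (x - y) = T x - T y"
  unfolding clinear_op_def csubspace_def by (metis diff_conv_add_uminus scaleC_minus_one)

lemma clinear_op_zero: "clinear_op D T \<Longrightarrow> T 0 = 0"
  unfolding clinear_op_def csubspace_def by (metis scaleC_zero_left)

lemma csubspace_image: "clinear_op D T \<Longrightarrow> csubspace (T ` D)"
  unfolding csubspace_def
  by (smt (verit, best) clinear_op_def clinear_op_zero csubspace_def image_iff)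

lemma closed_superset_of_dense: "closure D = UNIV \<Longrightarrow> closed S \<Longrightarrow> D \<subseteq> S \<Longrightarrow> x \<in> S"
  by (metis UNIV_I closure_minimal subsetD)

lemma orthogonal_to_dense_eq_zero:
  fixes a :: "'a::complex_inner"
  assumes "closure D = UNIV" and "\<And>u. u \<in> D \<Longrightarrow> cinner u a = 0"
  shows "a = 0"
proof -
  have "closed {u. cinner u a = 0}"
    by (intro closed_Collect_eq continuous_intros)
  then have "cinner a a = 0"
    using assms closed_superset_of_dense [of D _ a] by blast
  then show ?thesis by (simp add: cinner_eq_zero_iff)
qed

lemma adj_eqI:
  assumes "densely_defined D" and "\<And>u. u \<in> D \<Longrightarrow> cinner (T u) v = cinner u w"
  shows "v \<in> adj_dom D T" and "adj D T v = w"
proof -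
  show "v \<in> adj_dom D T" using assms(2) unfolding adj_dom_def by blast
  show "adj D T v = w" unfolding adj_def
  proof (rule the_equality)
    fix w' assume "\<forall>u\<in>D. cinner (T u) v = cinner u w'"
    then have "cinner u (w' - w) = 0" if "u \<in> D" for u
      using assms(2) that by (simp add: cinner_diff_right)
    then show "w' = w"
      using assms(1) orthogonal_to_dense_eq_zero [of D "w' - w"] by (simp add: densely_defined_def)
  qed (use assms(2) in blast)
qed

lemma adj_cinner:
  assumes "densely_defined D" and "v \<in> adj_dom D T" and "u \<in> D"
  shows "cinner (T u) v = cinner u (adj D T v)"
proof -
  obtain w where "\<forall>u\<in>D. cinner (T u) v = cinner u w"
    using assms(2) unfolding adj_dom_def by blast
  with adj_eqI(2) [OF assms(1)] assms(3) show ?thesis by metis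
qed

lemma clinear_op_adj:
  assumes "densely_defined D"
  shows "clinear_op (adj_dom D T) (adj D T)"
proof -
  note adj = adj_eqI [OF assms] adj_cinner [OF assms]
  have "0 \<in> adj_dom D T" "adj D T 0 = 0"
    using adj(1,2) [of T 0 0] by simp_all
  moreover have "x + y \<in> adj_dom D T \<and> adj D T (x + y) = adj D T x + adj D T y"
    if "x \<in> adj_dom D T" "y \<in> adj_dom D T" for x y
    using adj(1,2) [of T "x + y" "adj D T x + adj D T y"] adj(3) that
    by (simp add: cinner_add_right)
  moreover have "scaleC c x \<in> adj_dom D T \<and> adj D T (scaleC c x) = scaleC c (adj D T x)"
    if "x \<in> adj_dom D T" for c x
    using adj(1,2) [of T "scaleC c x" "scaleC c (adj D T x)"] adj(3) that
    by (simp add: cinner_scaleC_right)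
  ultimately show ?thesis
    unfolding clinear_op_def csubspace_def by blast
qed

lemma op_kernel_adj_iff:
  assumes "densely_defined D"
  shows "k \<in> op_kernel (adj_dom D T) (adj D T) \<longleftrightarrow> (\<forall>u\<in>D. cinner (T u) k = 0)"
  using adj_eqI [OF assms, of T k 0] adj_cinner [OF assms, of k T]
  by (auto simp: op_kernel_def)

lemma minimizing_sequence_Cauchy:
  fixes M :: "'a::complex_inner set"
  assumes sub: "csubspace M" and s_M: "\<And>n. s n \<in> M"
    and d_le: "\<And>m. m \<in> M \<Longrightarrow> d \<le> (norm (y - m))\<^sup>2"
    and s_close: "\<And>n. (norm (y - s n))\<^sup>2 < d + inverse (real (Suc n))"
  shows "Cauchy s"
proof -
  have s_diff: "(norm (s m - s n))\<^sup>2 \<le> 2 * inverse (real (Suc m)) + 2 * inverse (real (Suc n))"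
    for m n
  proof -
    have "scaleR (1/2) (s m + s n) \<in> M"
      using csubspace_scaleR [OF sub] s_M sub unfolding csubspace_def by blast
    then have "d \<le> (norm (y - scaleR (1/2) (s m + s n)))\<^sup>2" by (rule d_le)
    moreover have "(y - s m) + (y - s n) = scaleR 2 (y - scaleR (1/2) (s m + s n))"
      by (simp add: scaleR_right_diff_distrib scaleR_2)
    then have "(norm ((y - s m) + (y - s n)))\<^sup>2 = 4 * (norm (y - scaleR (1/2) (s m + s n)))\<^sup>2"
      by (simp add: power_mult_distrib)
    moreover have "(norm ((y - s m) - (y - s n)))\<^sup>2 = (norm (s m - s n))\<^sup>2"
      by (simp add: norm_minus_commute)
    ultimately show ?thesis
      using parallelogram_law [of "y - s m" "y - s n"] s_close [of m] s_close [of n] by linarith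
  qed
  show ?thesis
  proof (rule metric_CauchyI)
    fix e :: real assume e: "0 < e"
    then obtain N where N: "inverse (real (Suc N)) < e\<^sup>2 / 4"
      using reals_Archimedean [of "e\<^sup>2 / 4"] by auto
    have "dist (s m) (s n) < e" if "m \<ge> N" "n \<ge> N" for m n
    proof -
      have "inverse (real (Suc m)) \<le> inverse (real (Suc N))"
        "inverse (real (Suc n)) \<le> inverse (real (Suc N))"
        using that by (simp_all add: le_imp_inverse_le)
      then have "(norm (s m - s n))\<^sup>2 < e\<^sup>2" using s_diff [of m n] N by linarith
      then show ?thesis using e by (simp add: dist_norm power_less_imp_less_base)
    qed
    then show "\<exists>M. \<forall>m\<ge>M. \<forall>n\<ge>M. dist (s m) (s n) < e" by blast
  qed
qed

lemma closed_csubspace_nearest_point: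
  fixes M :: "'a::{complex_inner,banach} set"
  assumes sub: "csubspace M" and cl: "closed M"
  obtains p where "p \<in> M" and "\<And>m. m \<in> M \<Longrightarrow> norm (y - p) \<le> norm (y - m)"
proof -
  define d where "d = Inf ((\<lambda>m. (norm (y - m))\<^sup>2) ` M)"
  have bdd: "bdd_below ((\<lambda>m. (norm (y - m))\<^sup>2) ` M)"
    by (rule bdd_belowI [of _ 0]) auto
  have d_le: "d \<le> (norm (y - m))\<^sup>2" if "m \<in> M" for m
    unfolding d_def using that bdd by (auto intro: cInf_lower)
  have "\<exists>m\<in>M. (norm (y - m))\<^sup>2 < d + inverse (real (Suc n))" for n
    using cInf_less_iff [OF _ bdd, of "d + inverse (real (Suc n))"] sub
    by (auto simp: d_def csubspace_def)
  then obtain s where s_M: "\<And>n. s n \<in> M"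
    and s_close: "\<And>n. (norm (y - s n))\<^sup>2 < d + inverse (real (Suc n))"
    by metis
  have "Cauchy s"
    using sub s_M d_le s_close by (rule minimizing_sequence_Cauchy)
  then obtain p where s_lim: "s \<longlonglongrightarrow> p" using Cauchy_convergent convergent_def by blast
  have "(norm (y - p))\<^sup>2 \<le> d"
  proof (rule LIMSEQ_le)
    show "(\<lambda>n. (norm (y - s n))\<^sup>2) \<longlonglongrightarrow> (norm (y - p))\<^sup>2"
      by (intro tendsto_intros s_lim)
    show "(\<lambda>n. d + inverse (real (Suc n))) \<longlonglongrightarrow> d"
      using tendsto_add [OF tendsto_const LIMSEQ_inverse_real_of_nat, of d] by simp
  qed (use s_close less_imp_le in blast)
  then have "norm (y - p) \<le> norm (y - m)" if "m \<in> M" for m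
    using d_le [OF that] by (simp add: power2_le_imp_le)
  with closed_sequentially [OF cl s_M s_lim] show ?thesis by (rule that)
qed

lemma nearest_point_orthogonal:
  fixes M :: "'a::complex_inner set"
  assumes sub: "csubspace M" and "p \<in> M"
    and nearest: "\<And>m. m \<in> M \<Longrightarrow> norm (y - p) \<le> norm (y - m)" and "m \<in> M"
  shows "cinner (y - p) m = 0"
proof -
  define a where "a = cinner (y - p) m"
  define s where "s = inverse ((norm m)\<^sup>2 + 1)"
  have s: "s > 0" "s * (norm m)\<^sup>2 \<le> 1"
    by (simp_all add: s_def field_simps add_pos_nonneg)
  \<comment> \<open>Compare with the competitor p + s a m; s is small enough that the quadratic term is dominated.\<close>
  have "p + scaleC (of_real s * a) m \<in> M"
    using sub \<open>p \<in> M\<close> \<open>m \<in> M\<close> by (simp add: csubspace_def)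
  from nearest [OF this]
  have "(norm (y - p))\<^sup>2 \<le> (norm ((y - p) - scaleC (of_real s * a) m))\<^sup>2"
    by (simp add: diff_diff_eq power_mono)
  also have "\<dots> = (norm (y - p))\<^sup>2 - 2 * s * (cmod a)\<^sup>2 + s\<^sup>2 * (cmod a)\<^sup>2 * (norm m)\<^sup>2"
  proof -
    have "Re (cnj (of_real s * a) * a) = s * (cmod a)\<^sup>2"
      using cmod_power2 [of a] by (simp add: power2_eq_square algebra_simps)
    moreover have "cmod (of_real s * a) = s * cmod a"
      using s by (simp add: norm_mult)
    ultimately show ?thesis
      by (simp only: norm_diff_scaleC_squared a_def [symmetric]) (simp add: power_mult_distrib)
  qed
  finally have "s * (2 * (cmod a)\<^sup>2) \<le> s * ((s * (norm m)\<^sup>2) * (cmod a)\<^sup>2)"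
    by (simp add: algebra_simps power2_eq_square)
  then have "2 * (cmod a)\<^sup>2 \<le> (s * (norm m)\<^sup>2) * (cmod a)\<^sup>2"
    using s by simp
  also have "\<dots> \<le> (cmod a)\<^sup>2"
    using s mult_right_mono [of _ 1 "(cmod a)\<^sup>2"] by simp
  finally show ?thesis by (simp add: a_def)
qed

lemma orthogonal_projection_exists:
  fixes M :: "'a::{complex_inner,banach} set"
  assumes "csubspace M" and "closed M"
  obtains p where "p \<in> M" and "\<And>m. m \<in> M \<Longrightarrow> cinner (y - p) m = 0"
  using closed_csubspace_nearest_point [OF assms] nearest_point_orthogonal [OF assms(1)] by metis

lemma orthogonal_complement_orthogonal_complement_subset:
  fixes M :: "'a::{complex_inner,banach} set"
  assumes "csubspace M" and "closed M"
    and orth: "\<And>z. (\<And>m. m \<in> M \<Longrightarrow> cinner z m = 0) \<Longrightarrow> cinner y z = 0"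
  shows "y \<in> M"
proof -
  obtain p where p: "p \<in> M" "\<And>m. m \<in> M \<Longrightarrow> cinner (y - p) m = 0"
    using orthogonal_projection_exists [OF assms(1,2)] by blast
  have "cinner y (y - p) = 0"
    using p(2) by (rule orth)
  moreover have "cinner p (y - p) = 0"
    using p(2) [OF p(1)] cinner_eq_zero_sym by metis
  ultimately have "cinner (y - p) (y - p) = 0"
    by (simp add: cinner_diff_left)
  then show ?thesis
    using p(1) by (simp add: cinner_eq_zero_iff)
qed

lemma riesz_representation:
  fixes g :: "'a::{complex_inner,banach} \<Rightarrow> complex"
  assumes cont: "continuous_on UNIV g" and add: "\<And>x y. g (x + y) = g x + g y"
    and hom: "\<And>c x. g (scaleC c x) = c * g x"
  obtains w where "\<And>x. g x = cinner x w"
proof (cases "\<forall>x. g x = 0")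
  case True
  then show ?thesis by (intro that [of 0]) simp
next
  case False
  then obtain y where gy: "g y \<noteq> 0" by blast
  have g0: "g 0 = 0" using add [of 0 0] by simp
  define K where "K = {x. g x = 0}"
  have "csubspace K" unfolding K_def csubspace_def using g0 add hom by simp
  moreover have "closed K" unfolding K_def by (intro closed_Collect_eq cont continuous_on_const)
  ultimately obtain p where p: "p \<in> K" "\<And>m. m \<in> K \<Longrightarrow> cinner (y - p) m = 0"
    using orthogonal_projection_exists by blast
  define q where "q = y - p"
  have gq: "g q = g y" using add [of q p] p(1) by (simp add: q_def K_def)
  then have "cinner q q \<noteq> 0" using gy g0 by (auto simp: cinner_eq_zero_iff)
  \<comment> \<open>q spans the orthogonal complement of the kernel, so g is a multiple of the inner product with q.\<close>
  have "g x = cinner x (scaleC (cnj (g q / cinner q q)) q)" for x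
  proof -
    define z where "z = x - scaleC (g x / g q) q"
    have "g z = 0" using add [of z "scaleC (g x / g q) q"] hom gq gy by (simp add: z_def)
    then have "cinner z q = 0"
      using p(2) [of z] cinner_eq_zero_sym by (metis K_def q_def mem_Collect_eq)
    then have "cinner x q = (g x / g q) * cinner q q"
      by (simp add: z_def cinner_diff_left cinner_scaleC_left)
    then show ?thesis using \<open>cinner q q \<noteq> 0\<close> gq gy by (simp add: cinner_scaleC_right)
  qed
  then show ?thesis by (rule that)
qed

lemma bounded_clinear_op_extension:
  fixes B :: "'a::{complex_inner,banach} \<Rightarrow> 'a"
  assumes dense: "closure D = UNIV" and lin: "clinear_op D B"
    and bound: "\<And>x. x \<in> D \<Longrightarrow> norm (B x) \<le> C * norm x"
  obtains B' where "continuous_on UNIV B'" and "clinear_op UNIV B'"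
    and "\<And>x. x \<in> D \<Longrightarrow> B' x = B x"
proof -
  have sub: "csubspace D" using lin by (simp add: clinear_op_def)
  have "(max C 0)-lipschitz_on D B"
  proof (rule lipschitz_onI)
    fix x y assume xy: "x \<in> D" "y \<in> D"
    have "dist (B x) (B y) = norm (B (x - y))"
      using clinear_op_diff [OF lin xy] by (simp add: dist_norm)
    also have "\<dots> \<le> max C 0 * norm (x - y)"
      using bound [OF csubspace_diff [OF sub xy]] by (simp add: order_trans mult_right_mono)
    finally show "dist (B x) (B y) \<le> max C 0 * dist x y" by (simp add: dist_norm)
  qed simp
  then obtain B' where "uniformly_continuous_on (closure D) B'" and ext: "\<And>x. x \<in> D \<Longrightarrow> B x = B' x"
    using uniformly_continuous_on_extension_on_closure lipschitz_on_uniformly_continuous by metis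
  then have cont: "continuous_on UNIV B'"
    using dense uniformly_continuous_imp_continuous by metis
  \<comment> \<open>Additivity and homogeneity pass from the dense subspace to its closure since they are closed conditions.\<close>
  have "closure (D \<times> D) = UNIV" by (simp add: closure_Times dense)
  moreover have "closed {z::'a \<times> 'a. B' (fst z + snd z) = B' (fst z) + B' (snd z)}"
    by (intro closed_Collect_eq continuous_on_add continuous_on_compose2 [OF cont]
        continuous_intros) auto
  moreover have "D \<times> D \<subseteq> {z. B' (fst z + snd z) = B' (fst z) + B' (snd z)}"
    using lin ext sub unfolding clinear_op_def csubspace_def by auto
  ultimately have "(x, y) \<in> {z. B' (fst z + snd z) = B' (fst z) + B' (snd z)}" for x y
    by (rule closed_superset_of_dense)
  then have add: "B' (x + y) = B' x + B' y" for x y by simp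
  have "closed {x. B' (scaleC c x) = scaleC c (B' x)}" for c
    by (intro closed_Collect_eq continuous_on_compose2 [OF cont] continuous_intros cont) auto
  moreover have "D \<subseteq> {x. B' (scaleC c x) = scaleC c (B' x)}" for c
    using lin ext sub unfolding clinear_op_def csubspace_def by auto
  ultimately have hom: "B' (scaleC c x) = scaleC c (B' x)" for c x
    using closed_superset_of_dense [OF dense] by blast
  show ?thesis
    by (rule that [OF cont]) (simp_all add: clinear_op_def csubspace_def add hom ext)
qed

lemma closed_range_if_bounded_below:
  fixes T :: "'a::{complex_inner,banach} \<Rightarrow> 'a"
  assumes lin: "clinear_op D T" and cl: "closed_op D T" and "\<mu> > 0"
    and below: "\<And>x. x \<in> D \<Longrightarrow> \<mu> * norm x \<le> norm (T x)"
  shows "closed (T ` D)"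
  unfolding closed_sequential_limits
proof (intro allI impI, elim conjE)
  fix y l assume "\<forall>n. y n \<in> T ` D" and lim: "y \<longlonglongrightarrow> l"
  then have "\<forall>n. \<exists>u. u \<in> D \<and> y n = T u" by blast
  then obtain x where "\<forall>n. x n \<in> D \<and> y n = T (x n)" by metis
  then have x_D: "\<And>n. x n \<in> D" and y_eq: "y = (\<lambda>n. T (x n))" by auto
  have sub: "csubspace D" using lin by (simp add: clinear_op_def)
  have "Cauchy x"
  proof (rule metric_CauchyI)
    fix e :: real assume "e > 0"
    with \<open>\<mu> > 0\<close> have "\<mu> * e > 0" by simp
    then obtain N where N: "\<forall>m\<ge>N. \<forall>n\<ge>N. dist (y m) (y n) < \<mu> * e"
      using metric_CauchyD [OF LIMSEQ_imp_Cauchy [OF lim]] by blast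
    have "dist (x m) (x n) < e" if "m \<ge> N" "n \<ge> N" for m n
    proof -
      have "\<mu> * norm (x m - x n) \<le> norm (T (x m - x n))"
        by (rule below [OF csubspace_diff [OF sub x_D x_D]])
      also have "\<dots> < \<mu> * e"
        using N that clinear_op_diff [OF lin x_D x_D] by (simp add: y_eq dist_norm)
      finally show ?thesis using \<open>\<mu> > 0\<close> by (simp add: dist_norm)
    qed
    then show "\<exists>N. \<forall>m\<ge>N. \<forall>n\<ge>N. dist (x m) (x n) < e" by blast
  qed
  then obtain z where "x \<longlonglongrightarrow> z" using Cauchy_convergent convergent_def by blast
  have "(z, l) \<in> {(x, T x) | x. x \<in> D}"
  proof (rule closed_sequentially [OF cl [unfolded closed_op_def]])
    show "(x n, y n) \<in> {(x, T x) | x. x \<in> D}" for n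
      unfolding y_eq using x_D by blast
    show "(\<lambda>n. (x n, y n)) \<longlonglongrightarrow> (z, l)"
      using \<open>x \<longlonglongrightarrow> z\<close> lim by (rule tendsto_Pair)
  qed
  then show "l \<in> T ` D" by auto
qed

section \<open>Abstract Friedrichs operators\<close>

lemma bperp_antimono: "S \<subseteq> S' \<Longrightarrow> bperp W T Tt S' \<subseteq> bperp W T Tt S"
  by (auto simp: bperp_def)

lemma bperp_subset: "bperp W T Tt S \<subseteq> W"
  by (auto simp: bperp_def)

lemma Un_subset_sum3:
  fixes A B C :: "'a::monoid_add set"
  assumes "0 \<in> A" and "0 \<in> B" and "0 \<in> C"
  shows "A \<union> B \<union> C \<subseteq> sum3 A B C"
proof -
  have "a + 0 + 0 \<in> sum3 A B C" if "a \<in> A" for a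
    using assms that unfolding sum3_def by blast
  moreover have "0 + b + 0 \<in> sum3 A B C" if "b \<in> B" for b
    using assms that unfolding sum3_def by blast
  moreover have "0 + 0 + c \<in> sum3 A B C" if "c \<in> C" for c
    using assms that unfolding sum3_def by blast
  ultimately show ?thesis by auto
qed

locale joint_AFO_pair =
  fixes W0 :: "'h::{complex_inner,banach} set" and T0 Tt0 :: "'h \<Rightarrow> 'h"
  assumes joint_pair: "joint_pair_AFO W0 T0 Tt0"
begin

abbreviation "W \<equiv> adj_dom W0 Tt0"
abbreviation "T1 \<equiv> adj W0 Tt0"
abbreviation "Wt \<equiv> adj_dom W0 T0"
abbreviation "Tt1 \<equiv> adj W0 T0"

lemma densely_defined_W0: "densely_defined W0"
  and clinear_T0: "clinear_op W0 T0"
  and clinear_Tt0: "clinear_op W0 Tt0"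
  and T0_Tt0_adjoint: "\<phi> \<in> W0 \<Longrightarrow> \<psi> \<in> W0 \<Longrightarrow> cinner (T0 \<phi>) \<psi> = cinner \<phi> (Tt0 \<psi>)"
  using joint_pair by (simp_all add: joint_pair_AFO_def)

lemma Tt0_T0_adjoint:
  assumes "\<phi> \<in> W0" and "\<psi> \<in> W0"
  shows "cinner (Tt0 \<phi>) \<psi> = cinner \<phi> (T0 \<psi>)"
  using cinner_swap_eq [OF T0_Tt0_adjoint [OF assms(2,1)]] by (rule sym)

lemma T1_extends_T0:
  assumes "\<phi> \<in> W0"
  shows "\<phi> \<in> W" and "T1 \<phi> = T0 \<phi>"
  using adj_eqI [OF densely_defined_W0, of Tt0 \<phi> "T0 \<phi>"] Tt0_T0_adjoint assms by auto

lemma Tt1_extends_Tt0: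
  assumes "\<phi> \<in> W0"
  shows "\<phi> \<in> Wt" and "Tt1 \<phi> = Tt0 \<phi>"
  using adj_eqI [OF densely_defined_W0, of T0 \<phi> "Tt0 \<phi>"] T0_Tt0_adjoint assms by auto

lemma diff_in_ker_T1:
  assumes "x \<in> W" and "w \<in> W0" and "T1 x = T0 w"
  shows "x - w \<in> op_kernel W T1"
proof -
  note T1_linear = clinear_op_adj [OF densely_defined_W0, of Tt0]
  have "w \<in> W" and "T1 w = T0 w"
    using T1_extends_T0 [OF assms(2)] by auto
  have "csubspace W"
    using T1_linear by (simp add: clinear_op_def)
  then have "x - w \<in> W"
    using assms(1) \<open>w \<in> W\<close> by (rule csubspace_diff)
  moreover have "T1 (x - w) = 0"
    using clinear_op_diff [OF T1_linear assms(1) \<open>w \<in> W\<close>] assms(3) \<open>T1 w = T0 w\<close> by simp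
  ultimately show ?thesis
    by (simp add: op_kernel_def)
qed

lemma bform_W0_right:
  assumes "u \<in> W" and "\<phi> \<in> W0"
  shows "bform T1 Tt1 u \<phi> = 0"
proof -
  have "cinner (Tt0 \<phi>) u = cinner \<phi> (T1 u)"
    using densely_defined_W0 assms by (rule adj_cinner)
  then have "cinner u (Tt0 \<phi>) = cinner (T1 u) \<phi>"
    by (rule cinner_swap_eq)
  then show ?thesis
    by (simp add: bform_def Tt1_extends_Tt0 (2) [OF assms(2)])
qed

lemma bperp_W0: "bperp W T1 Tt1 W0 = W"
  by (auto simp: bperp_def bform_W0_right)

lemma T0_bounded_below:
  obtains \<mu> where "\<mu> > 0" and "\<And>\<phi>. \<phi> \<in> W0 \<Longrightarrow> \<mu> * norm \<phi> \<le> norm (T0 \<phi>)"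
proof -
  obtain \<mu> where "\<mu> > 0"
    and coercive: "\<And>\<phi>. \<phi> \<in> W0 \<Longrightarrow> 2 * \<mu> * (norm \<phi>)\<^sup>2 \<le> Re (cinner (T0 \<phi> + Tt0 \<phi>) \<phi>)"
    using joint_pair unfolding joint_pair_AFO_def by blast
  have "\<mu> * norm \<phi> \<le> norm (T0 \<phi>)" if "\<phi> \<in> W0" for \<phi>
  proof -
    have "cinner (Tt0 \<phi>) \<phi> = cnj (cinner (T0 \<phi>) \<phi>)"
      using T0_Tt0_adjoint [OF that that] by (simp add: cinner_commute [of "Tt0 \<phi>"])
    then have "\<mu> * (norm \<phi>)\<^sup>2 \<le> Re (cinner (T0 \<phi>) \<phi>)"
      using coercive [OF that] by (simp add: cinner_add_left)
    also have "\<dots> \<le> cmod (cinner (T0 \<phi>) \<phi>)"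
      by (rule complex_Re_le_cmod)
    also have "\<dots> \<le> norm (T0 \<phi>) * norm \<phi>"
      by (rule norm_cinner_le)
    finally show ?thesis
      by (cases "\<phi> = 0") (auto simp: power2_eq_square)
  qed
  with \<open>\<mu> > 0\<close> show ?thesis by (rule that)
qed

lemma T0_plus_Tt0_extension:
  obtains \<mu> B where "\<mu> > 0" and "continuous_on UNIV B" and "clinear_op UNIV B"
    and "\<And>x. x \<in> W0 \<Longrightarrow> B x = T0 x + Tt0 x"
    and "\<And>x. 2 * \<mu> * (norm x)\<^sup>2 \<le> Re (cinner (B x) x)"
proof -
  obtain c \<mu> where bounded: "\<And>\<phi>. \<phi> \<in> W0 \<Longrightarrow> norm (T0 \<phi> + Tt0 \<phi>) \<le> c * norm \<phi>"
    and "\<mu> > 0"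
    and coercive: "\<And>\<phi>. \<phi> \<in> W0 \<Longrightarrow> 2 * \<mu> * (norm \<phi>)\<^sup>2 \<le> Re (cinner (T0 \<phi> + Tt0 \<phi>) \<phi>)"
    using joint_pair unfolding joint_pair_AFO_def by blast
  have "clinear_op W0 (\<lambda>x. T0 x + Tt0 x)"
    using clinear_T0 clinear_Tt0 unfolding clinear_op_def by (simp add: scaleC_add_right)
  moreover have dense: "closure W0 = UNIV"
    using densely_defined_W0 by (simp add: densely_defined_def)
  ultimately obtain B where B: "continuous_on UNIV B" "clinear_op UNIV B"
    and B_eq: "\<And>x. x \<in> W0 \<Longrightarrow> B x = T0 x + Tt0 x"
    using bounded_clinear_op_extension [of W0 "\<lambda>x. T0 x + Tt0 x" c] bounded by blast
  note dense
  moreover have "closed {x. 2 * \<mu> * (norm x)\<^sup>2 \<le> Re (cinner (B x) x)}"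
    by (intro closed_Collect_le continuous_intros B(1))
  moreover have "W0 \<subseteq> {x. 2 * \<mu> * (norm x)\<^sup>2 \<le> Re (cinner (B x) x)}"
    using coercive B_eq by auto
  ultimately have "x \<in> {x. 2 * \<mu> * (norm x)\<^sup>2 \<le> Re (cinner (B x) x)}" for x
    by (rule closed_superset_of_dense)
  then have "2 * \<mu> * (norm x)\<^sup>2 \<le> Re (cinner (B x) x)" for x
    by simp
  with \<open>\<mu> > 0\<close> B B_eq show ?thesis by (rule that)
qed

lemma ker_T1_coercive:
  obtains \<mu> where "\<mu> > 0"
    and "\<And>k. k \<in> op_kernel W T1 \<Longrightarrow> k \<in> Wt \<and> 2 * \<mu> * (norm k)\<^sup>2 \<le> Re (cinner k (Tt1 k))"
proof -
  obtain \<mu> B where "\<mu> > 0" and B: "continuous_on UNIV B" "clinear_op UNIV B"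
    and B_eq: "\<And>x. x \<in> W0 \<Longrightarrow> B x = T0 x + Tt0 x"
    and coercive: "\<And>x. 2 * \<mu> * (norm x)\<^sup>2 \<le> Re (cinner (B x) x)"
    using T0_plus_Tt0_extension by blast
  have "k \<in> Wt \<and> 2 * \<mu> * (norm k)\<^sup>2 \<le> Re (cinner k (Tt1 k))" if k: "k \<in> op_kernel W T1" for k
  proof -
    have cont: "continuous_on UNIV (\<lambda>x. cinner (B x) k)"
      by (intro continuous_on_cinner B(1) continuous_on_const)
    have add: "cinner (B (x + y)) k = cinner (B x) k + cinner (B y) k" for x y
      using B(2) by (simp add: clinear_op_def cinner_add_left)
    have hom: "cinner (B (scaleC c x)) k = c * cinner (B x) k" for c x
      using B(2) by (simp add: clinear_op_def cinner_scaleC_left)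
    obtain w where w: "\<And>x. cinner (B x) k = cinner x w"
      using riesz_representation [OF cont add hom] by blast
    have "cinner (T0 u) k = cinner u w" if "u \<in> W0" for u
    proof -
      have "cinner u w = cinner (T0 u) k + cinner (Tt0 u) k"
        using w [of u] B_eq [OF that] by (simp add: cinner_add_left)
      also have "cinner (Tt0 u) k = cinner u (T1 k)"
        using adj_cinner [OF densely_defined_W0 _ that] k by (simp add: op_kernel_def)
      finally show ?thesis
        using k by (simp add: op_kernel_def)
    qed
    note adj_eqI [OF densely_defined_W0 this]
    with coercive [of k] w [of k] show ?thesis by simp
  qed
  with \<open>\<mu> > 0\<close> show ?thesis by (rule that)
qed

end

locale closed_AFO_pair = joint_AFO_pair +
  assumes closed_T0: "closed_op W0 T0"
begin

lemma closed_range_T0: "closed (T0 ` W0)"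
proof -
  obtain \<mu> where "\<mu> > 0" and "\<And>\<phi>. \<phi> \<in> W0 \<Longrightarrow> \<mu> * norm \<phi> \<le> norm (T0 \<phi>)"
    using T0_bounded_below by blast
  then show ?thesis
    by (rule closed_range_if_bounded_below [OF clinear_T0 closed_T0])
qed

lemma orthogonal_ker_Tt1_in_range_T0:
  assumes "\<And>k. k \<in> op_kernel Wt Tt1 \<Longrightarrow> cinner y k = 0"
  shows "y \<in> T0 ` W0"
proof (rule orthogonal_complement_orthogonal_complement_subset
    [OF csubspace_image [OF clinear_T0] closed_range_T0])
  fix z assume z_perp: "\<And>m. m \<in> T0 ` W0 \<Longrightarrow> cinner z m = 0"
  have "cinner (T0 u) z = 0" if "u \<in> W0" for u
    using z_perp [OF imageI [OF that]] by (simp add: cinner_eq_zero_sym [of "T0 u" z])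
  then have "z \<in> op_kernel Wt Tt1"
    by (simp add: op_kernel_adj_iff [OF densely_defined_W0])
  then show "cinner y z = 0" by (rule assms)
qed

lemma bperp_kernels_subset_W0: "bperp W T1 Tt1 (op_kernel W T1 \<union> op_kernel Wt Tt1) \<subseteq> W0"
proof
  fix x assume "x \<in> bperp W T1 Tt1 (op_kernel W T1 \<union> op_kernel Wt Tt1)"
  then have "x \<in> W" and x_perp: "\<And>v. v \<in> op_kernel W T1 \<union> op_kernel Wt Tt1 \<Longrightarrow>
      cinner (T1 x) v = cinner x (Tt1 v)"
    by (auto simp: bperp_def bform_def)
  obtain \<mu> where "\<mu> > 0" and ker_coercive: "\<And>k. k \<in> op_kernel W T1 \<Longrightarrow>
      k \<in> Wt \<and> 2 * \<mu> * (norm k)\<^sup>2 \<le> Re (cinner k (Tt1 k))"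
    using ker_T1_coercive by blast
  have "cinner (T1 x) k = 0" if "k \<in> op_kernel Wt Tt1" for k
    using x_perp [of k] that by (simp add: op_kernel_def)
  then have "T1 x \<in> T0 ` W0"
    by (rule orthogonal_ker_Tt1_in_range_T0)
  then obtain w where "w \<in> W0" and T1x: "T1 x = T0 w" by blast
  define k where "k = x - w"
  have k_ker: "k \<in> op_kernel W T1"
    unfolding k_def using \<open>x \<in> W\<close> \<open>w \<in> W0\<close> T1x by (rule diff_in_ker_T1)
  then have "k \<in> Wt" using ker_coercive by blast
  have "cinner k (Tt1 k) = cinner x (Tt1 k) - cinner w (Tt1 k)"
    by (simp add: k_def cinner_diff_left)
  also have "\<dots> = cinner (T1 x) k - cinner (T0 w) k"
    using x_perp [of k] k_ker adj_cinner [OF densely_defined_W0 \<open>k \<in> Wt\<close> \<open>w \<in> W0\<close>] by simp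
  also have "\<dots> = 0" by (simp add: T1x)
  finally have "2 * \<mu> * (norm k)\<^sup>2 \<le> 0"
    using ker_coercive [OF k_ker] by simp
  with \<open>\<mu> > 0\<close> have "k = 0"
    by (simp add: mult_le_0_iff)
  with \<open>w \<in> W0\<close> show "x \<in> W0" by (simp add: k_def)
qed

end

theorem lemma3p7:
  fixes W0 :: "'h::{complex_inner, banach} set"
    and T0 Tt0 :: "'h \<Rightarrow> 'h"
  assumes "joint_pair_closed_AFO W0 T0 Tt0"
  defines "T1 \<equiv> adj W0 Tt0"
    and "Tt1 \<equiv> adj W0 T0"
    and "W \<equiv> adj_dom W0 Tt0"
  shows "bperp W T1 Tt1 (bperp W T1 Tt1
           (sum3 W0 (op_kernel W T1) (op_kernel (adj_dom W0 T0) Tt1))) = W"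
proof -
  have pair: "closed_AFO_pair W0 T0 Tt0"
    using assms(1) by unfold_locales (simp_all add: joint_pair_closed_AFO_def)
  then have joint: "joint_AFO_pair W0 T0 Tt0"
    by (rule closed_AFO_pair.axioms(1))
  let ?K = "op_kernel W T1 \<union> op_kernel (adj_dom W0 T0) Tt1"
  let ?V = "sum3 W0 (op_kernel W T1) (op_kernel (adj_dom W0 T0) Tt1)"
  have "0 \<in> W0"
    using joint_AFO_pair.clinear_T0 [OF joint] by (simp add: clinear_op_def csubspace_def)
  moreover have "0 \<in> op_kernel (adj_dom W0 T) (adj W0 T)" for T
    using clinear_op_adj [OF joint_AFO_pair.densely_defined_W0 [OF joint], of T] clinear_op_zero
    by (simp add: op_kernel_def clinear_op_def csubspace_def)
  ultimately have "W0 \<union> op_kernel W T1 \<union> op_kernel (adj_dom W0 T0) Tt1 \<subseteq> ?V"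
    unfolding T1_def Tt1_def W_def by (intro Un_subset_sum3)
  then have "bperp W T1 Tt1 ?V \<subseteq> bperp W T1 Tt1 ?K"
    by (intro bperp_antimono) auto
  also have "\<dots> \<subseteq> W0"
    using closed_AFO_pair.bperp_kernels_subset_W0 [OF pair] unfolding T1_def Tt1_def W_def .
  finally have "bperp W T1 Tt1 W0 \<subseteq> bperp W T1 Tt1 (bperp W T1 Tt1 ?V)"
    by (rule bperp_antimono)
  then have "W \<subseteq> bperp W T1 Tt1 (bperp W T1 Tt1 ?V)"
    using joint_AFO_pair.bperp_W0 [OF joint] unfolding T1_def Tt1_def W_def by simp
  with bperp_subset show ?thesis
    by (rule subset_antisym)
qed

end
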